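(* For any distributions $P,Q,R$ and any $n\geq 1$, if $X_1,\dots,X_n$ are i.i.d. from $R$, then $$\mathrm{Var}\big(\mathrm{T}(P,Q,X^n)\big) \leq \frac{55}{n}\max\big(\mathrm{H}^2(P,R),\,\mathrm{H}^2(Q,R)\big).$$
   Context: Distributions $P,Q,R$ are probability distributions on a measurable space $\mathcal{X}$, identified with their densities with respect to a common $\sigma$-finite reference measure $\mu$ (e.g. Lebesgue measure, or counting measure in the discrete case). All integrals and norms are taken with respect to $\mu$, with $\|U\|_p = (\int |U|^p\, d\mu)^{1/p}$. The Hellinger distance is $\mathrm{H}(P,Q) = \frac{1}{\sqrt{2}}\|\sqrt{P}-\sqrt{Q}\|_2$. For a sample $X^n=(X_1,\dots,X_n)$, the test statistic is $$\mathrm{T}(P,Q,X^n) = \frac{1}{n}\sum_{i=1}^n \frac{P(X_i)-Q(X_i)}{P(X_i)+Q(X_i)},$$ where a summand is interpreted as $0$ whenever $P(X_i)+Q(X_i)=0$. *)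

theory Defs
  imports "HOL-Probability.Probability"
begin

definition is_density :: "'a measure \<Rightarrow> ('a \<Rightarrow> real) \<Rightarrow> bool" where
  "is_density M P \<longleftrightarrow> P \<in> borel_measurable M \<and> (\<forall>x\<in>space M. 0 \<le> P x)
      \<and> integrable M P \<and> (\<integral>x. P x \<partial>M) = 1"

definition hellinger :: "'a measure \<Rightarrow> ('a \<Rightarrow> real) \<Rightarrow> ('a \<Rightarrow> real) \<Rightarrow> real" where
  "hellinger M P Q = (1 / sqrt 2) * sqrt (\<integral>x. (sqrt (P x) - sqrt (Q x))^2 \<partial>M)"

definition tsummand :: "('a \<Rightarrow> real) \<Rightarrow> ('a \<Rightarrow> real) \<Rightarrow> 'a \<Rightarrow> real" where
  "tsummand P Q x = (if P x + Q x = 0 then 0 else (P x - Q x) / (P x + Q x))"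

definition Tstat :: "('a \<Rightarrow> real) \<Rightarrow> ('a \<Rightarrow> real) \<Rightarrow> nat \<Rightarrow> (nat \<Rightarrow> 'a) \<Rightarrow> real" where
  "Tstat P Q n X = (1 / real n) * (\<Sum>i<n. tsummand P Q (X i))"

definition var_of :: "'b measure \<Rightarrow> ('b \<Rightarrow> real) \<Rightarrow> real" where
  "var_of N Y = (\<integral>\<omega>. (Y \<omega> - (\<integral>\<omega>'. Y \<omega>' \<partial>N))^2 \<partial>N)"

definition iid_sample :: "'a measure \<Rightarrow> ('a \<Rightarrow> real) \<Rightarrow> nat \<Rightarrow> (nat \<Rightarrow> 'a) measure" where
  "iid_sample M R n = PiM {..<n} (\<lambda>_. density M (\<lambda>x. ennreal (R x)))"

end

theory Submission
  imports Defs
begin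

text \<open>
  T is the empirical mean of f = tsummand P Q over an i.i.d. sample from R, so its variance is
  Var f / n \<le> E_R f^2 / n. Pointwise, with a = sqrt P, b = sqrt Q, r = sqrt R, one has
  R f^2 = r^2 ((a^2 - b^2)/(a^2 + b^2))^2 \<le> 9 ((a - r)^2 + (b - r)^2): factor
  a^2 - b^2 = (a - b)(a + b) and bound (a - b)^2 by 2 ((a - r)^2 + (b - r)^2) when r is comparable
  to a and b, or by a^2 + b^2 when r is much larger. Integrating against M gives
  E_R f^2 \<le> 18 (H^2(P,R) + H^2(Q,R)) \<le> 36 max(H^2(P,R), H^2(Q,R)).
\<close>

lemma sq_mul_diff_over_sum_sq_le:
  fixes a b r :: real
  assumes a: "a \<ge> 0" and b: "b \<ge> 0" and r: "r \<ge> 0"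
  shows "r^2 * ((a^2 - b^2) / (a^2 + b^2))^2 \<le> 9 * ((a - r)^2 + (b - r)^2)"
proof (cases "a^2 + b^2 = 0")
  case True
  then show ?thesis by simp
next
  case False
  define s where "s = a^2 + b^2"
  define D where "D = (a - r)^2 + (b - r)^2"
  have s_pos: "s > 0" using False unfolding s_def by (simp add: add_nonneg_eq_0_iff order_less_le)
  have D_nonneg: "0 \<le> D" unfolding D_def by simp
  have "(a + b)^2 \<le> 2 * s"
    using zero_le_power2[of "a - b"] unfolding s_def power2_eq_square by (simp add: algebra_simps)
  then have "(a - b)^2 * (a + b)^2 \<le> (a - b)^2 * (2 * s)"
    by (simp add: mult_left_mono)
  moreover have "(a^2 - b^2)^2 = (a - b)^2 * (a + b)^2"
    by (simp add: power2_eq_square algebra_simps)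
  ultimately have "(a^2 - b^2)^2 \<le> (a - b)^2 * (2 * s)" by simp
  then have factor: "r^2 * (a^2 - b^2)^2 \<le> r^2 * ((a - b)^2 * (2 * s))"
    by (simp add: mult_left_mono)
  have key: "r^2 * (a^2 - b^2)^2 \<le> 9 * D * s^2"
  proof (cases "r^2 \<le> 9/4 * s")
    case True
    have "(a - b)^2 \<le> 2 * D"
      using zero_le_power2[of "a + b - 2 * r"] unfolding D_def power2_eq_square
      by (simp add: algebra_simps)
    then have "r^2 * ((a - b)^2 * (2 * s)) \<le> (9/4 * s) * ((2 * D) * (2 * s))"
      using True s_pos D_nonneg by (intro mult_mono) (auto intro: mult_mono)
    with factor show ?thesis by (simp add: power2_eq_square algebra_simps)
  next
    case False
    \<comment> \<open>r is large compared with a and b, so both distances to r are at least r/3\<close>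
    have a_sq: "a^2 \<le> (2/3 * r)^2" and b_sq: "b^2 \<le> (2/3 * r)^2"
      using False zero_le_power2[of a] zero_le_power2[of b]
      unfolding s_def power_mult_distrib by (simp_all add: power_divide, linarith+)
    have "a \<le> 2/3 * r" using a_sq by (rule power2_le_imp_le) (use r in simp)
    moreover have "b \<le> 2/3 * r" using b_sq by (rule power2_le_imp_le) (use r in simp)
    ultimately have "(r/3)^2 \<le> (r - a)^2" and "(r/3)^2 \<le> (r - b)^2"
      using a b r by (auto intro!: power_mono)
    then have r_le_D: "2 * r^2 \<le> 9 * D"
      unfolding D_def by (simp add: power2_eq_square algebra_simps)
    have "(a - b)^2 \<le> s"
      using a b unfolding s_def power2_eq_square by (simp add: algebra_simps)
    then have "r^2 * ((a - b)^2 * (2 * s)) \<le> r^2 * (s * (2 * s))"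
      using s_pos by (intro mult_left_mono mult_right_mono) auto
    also have "\<dots> = (2 * r^2) * s^2" by (simp add: power2_eq_square)
    also have "\<dots> \<le> 9 * D * s^2" using r_le_D by (intro mult_right_mono) auto
    finally show ?thesis using factor by linarith
  qed
  have "r^2 * ((a^2 - b^2) / (a^2 + b^2))^2 = r^2 * (a^2 - b^2)^2 / s^2"
    by (simp add: s_def power_divide)
  also have "\<dots> \<le> 9 * D" using key s_pos by (simp add: divide_le_eq)
  finally show ?thesis unfolding D_def .
qed

lemma abs_tsummand_le_1:
  assumes "P x \<ge> 0" "Q x \<ge> 0"
  shows "\<bar>tsummand P Q x\<bar> \<le> 1"
  using assms unfolding tsummand_def by (auto simp: divide_le_eq_1)

lemma mult_tsummand_sq_le:
  assumes P: "P x \<ge> 0" and Q: "Q x \<ge> 0" and R: "R x \<ge> 0"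
  shows "R x * (tsummand P Q x)^2
           \<le> 9 * ((sqrt (P x) - sqrt (R x))^2 + (sqrt (Q x) - sqrt (R x))^2)"
proof (cases "P x + Q x = 0")
  case True
  then show ?thesis unfolding tsummand_def by simp
next
  case False
  with sq_mul_diff_over_sum_sq_le[of "sqrt (P x)" "sqrt (Q x)" "sqrt (R x)"] P Q R
  show ?thesis unfolding tsummand_def by simp
qed

lemma
  fixes h :: "'a \<Rightarrow> real"
  assumes D: "prob_space D" and I: "finite I" and S: "S \<subseteq> I" and h: "integrable D h"
  shows integrable_PiM_iid_prod: "integrable (PiM I (\<lambda>_. D)) (\<lambda>\<omega>. \<Prod>k\<in>S. h (\<omega> k))"
    and integral_PiM_iid_prod:
      "(\<integral>\<omega>. (\<Prod>k\<in>S. h (\<omega> k)) \<partial>PiM I (\<lambda>_. D)) = (\<integral>x. h x \<partial>D) ^ card S"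
proof -
  interpret D: prob_space D by (fact D)
  interpret product_sigma_finite "\<lambda>_::'i. D"
    by (simp add: product_sigma_finite_def D.sigma_finite_measure_axioms)
  define F where "F k x = (if k \<in> S then h x else 1)" for k x
  have F_integrable: "integrable D (F k)" for k
    unfolding F_def using h by (cases "k \<in> S") simp_all
  have prod_F: "(\<Prod>k\<in>S. h (\<omega> k)) = (\<Prod>k\<in>I. F k (\<omega> k))" for \<omega>
    using prod.inter_restrict[OF I, of "\<lambda>k. h (\<omega> k)" S] S unfolding F_def
    by (simp add: Int_absorb1 if_distrib)
  show "integrable (PiM I (\<lambda>_. D)) (\<lambda>\<omega>. \<Prod>k\<in>S. h (\<omega> k))"
    unfolding prod_F by (rule product_integrable_prod[OF I F_integrable])
  have "(\<integral>\<omega>. (\<Prod>k\<in>S. h (\<omega> k)) \<partial>PiM I (\<lambda>_. D)) = (\<Prod>k\<in>I. \<integral>x. F k x \<partial>D)"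
    unfolding prod_F by (rule product_integral_prod[OF I F_integrable])
  also have "\<dots> = (\<Prod>k\<in>S. \<integral>x. h x \<partial>D)"
    using prod.inter_restrict[OF I, of "\<lambda>_. \<integral>x. h x \<partial>D" S] S unfolding F_def
    by (simp add: Int_absorb1) (intro prod.cong, auto simp: D.prob_space)
  finally show "(\<integral>\<omega>. (\<Prod>k\<in>S. h (\<omega> k)) \<partial>PiM I (\<lambda>_. D)) = (\<integral>x. h x \<partial>D) ^ card S"
    by simp
qed

lemma integral_sum_square_orthogonal:
  fixes X :: "'i \<Rightarrow> 'a \<Rightarrow> real"
  assumes "finite I"
    and integrable: "\<And>i j. i \<in> I \<Longrightarrow> j \<in> I \<Longrightarrow> integrable M (\<lambda>\<omega>. X i \<omega> * X j \<omega>)"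
    and orthogonal: "\<And>i j. i \<in> I \<Longrightarrow> j \<in> I \<Longrightarrow> i \<noteq> j \<Longrightarrow> (\<integral>\<omega>. X i \<omega> * X j \<omega> \<partial>M) = 0"
  shows "(\<integral>\<omega>. (\<Sum>i\<in>I. X i \<omega>)^2 \<partial>M) = (\<Sum>i\<in>I. \<integral>\<omega>. (X i \<omega>)^2 \<partial>M)"
proof -
  have "(\<integral>\<omega>. (\<Sum>i\<in>I. X i \<omega>)^2 \<partial>M) = (\<integral>\<omega>. (\<Sum>i\<in>I. \<Sum>j\<in>I. X i \<omega> * X j \<omega>) \<partial>M)"
    by (simp add: power2_eq_square sum_product)
  also have "\<dots> = (\<Sum>i\<in>I. \<Sum>j\<in>I. \<integral>\<omega>. X i \<omega> * X j \<omega> \<partial>M)"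
    using integrable by (simp add: Bochner_Integration.integral_sum)
  also have "\<dots> = (\<Sum>i\<in>I. \<Sum>j\<in>I. if i = j then \<integral>\<omega>. X i \<omega> * X i \<omega> \<partial>M else 0)"
    using orthogonal by (intro sum.cong) auto
  also have "\<dots> = (\<Sum>i\<in>I. \<integral>\<omega>. X i \<omega> * X i \<omega> \<partial>M)"
    using \<open>finite I\<close> by simp
  finally show ?thesis by (simp add: power2_eq_square)
qed

lemma var_of_iid_mean:
  fixes f :: "'a \<Rightarrow> real"
  assumes D: "prob_space D" and f: "integrable D f" and f_sq: "integrable D (\<lambda>x. (f x)^2)"
  shows "var_of (PiM {..<n} (\<lambda>_. D)) (\<lambda>\<omega>. 1 / real n * (\<Sum>i<n. f (\<omega> i)))
           = prob_space.variance D f / real n"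
proof (cases "n = 0")
  case True
  then show ?thesis by (simp add: var_of_def)
next
  case False
  interpret D: prob_space D by (fact D)
  define \<Omega> where "\<Omega> = PiM {..<n} (\<lambda>_. D)"
  define \<mu> where "\<mu> = D.expectation f"
  define g where "g x = f x - \<mu>" for x
  have g: "integrable D g" and g_sq: "integrable D (\<lambda>x. (g x)^2)"
    unfolding g_def using f f_sq by (auto simp: power2_diff)
  have g_centred: "(\<integral>x. g x \<partial>D) = 0"
    unfolding g_def \<mu>_def using f by (simp add: D.prob_space)
  have coordinate: "integrable \<Omega> (\<lambda>\<omega>. h (\<omega> i))" "(\<integral>\<omega>. h (\<omega> i) \<partial>\<Omega>) = (\<integral>x. h x \<partial>D)"
    if "integrable D h" "i < n" for h :: "'a \<Rightarrow> real" and i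
    using integrable_PiM_iid_prod[OF D finite_lessThan _ that(1), of "{i}"]
      integral_PiM_iid_prod[OF D finite_lessThan _ that(1), of "{i}"] that(2)
    unfolding \<Omega>_def by simp_all
  have pair: "integrable \<Omega> (\<lambda>\<omega>. g (\<omega> i) * g (\<omega> j))" "(\<integral>\<omega>. g (\<omega> i) * g (\<omega> j) \<partial>\<Omega>) = 0"
    if "i < n" "j < n" "i \<noteq> j" for i j
    using integrable_PiM_iid_prod[OF D finite_lessThan _ g, of "{i, j}"]
      integral_PiM_iid_prod[OF D finite_lessThan _ g, of "{i, j}"] that g_centred
    unfolding \<Omega>_def by simp_all
  have mean: "(\<integral>\<omega>. 1 / real n * (\<Sum>i<n. f (\<omega> i)) \<partial>\<Omega>) = \<mu>"
    using coordinate[OF f] False unfolding \<mu>_def by (simp add: Bochner_Integration.integral_sum)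
  have sum_sq: "(\<integral>\<omega>. (\<Sum>i<n. g (\<omega> i))^2 \<partial>\<Omega>) = (\<Sum>i<n. \<integral>\<omega>. (g (\<omega> i))^2 \<partial>\<Omega>)"
  proof (rule integral_sum_square_orthogonal)
    show "integrable \<Omega> (\<lambda>\<omega>. g (\<omega> i) * g (\<omega> j))" if "i \<in> {..<n}" "j \<in> {..<n}" for i j
      using pair coordinate(1)[OF g_sq] that by (cases "i = j") (auto simp: power2_eq_square)
  qed (use pair in auto)
  have "var_of \<Omega> (\<lambda>\<omega>. 1 / real n * (\<Sum>i<n. f (\<omega> i)))
      = (\<integral>\<omega>. (1 / real n)^2 * (\<Sum>i<n. g (\<omega> i))^2 \<partial>\<Omega>)"
    unfolding var_of_def mean g_def using False
    by (simp add: sum_subtractf power_mult_distrib[symmetric] field_simps)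
  also have "\<dots> = (1 / real n)^2 * (\<Sum>i<n. \<integral>\<omega>. (g (\<omega> i))^2 \<partial>\<Omega>)"
    unfolding integral_mult_right_zero sum_sq ..
  also have "\<dots> = D.variance f / real n"
    using coordinate[OF g_sq] unfolding g_def \<mu>_def by (simp add: power2_eq_square)
  finally show ?thesis unfolding \<Omega>_def .
qed

lemma prob_space_density_is_density:
  assumes "is_density M R"
  shows "prob_space (density M (\<lambda>x. ennreal (R x)))"
proof (rule prob_spaceI)
  have [measurable]: "R \<in> borel_measurable M"
    using assms unfolding is_density_def by simp
  have "emeasure (density M (\<lambda>x. ennreal (R x))) (space M)
      = (\<integral>\<^sup>+x. ennreal (R x) * indicator (space M) x \<partial>M)"
    by (simp add: emeasure_density)
  also have "\<dots> = (\<integral>\<^sup>+x. ennreal (R x) \<partial>M)"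
    by (intro nn_integral_cong) simp
  also have "\<dots> = 1"
    using assms unfolding is_density_def by (simp add: nn_integral_eq_integral)
  finally show "emeasure (density M (\<lambda>x. ennreal (R x))) (space (density M (\<lambda>x. ennreal (R x)))) = 1"
    by simp
qed

lemma borel_measurable_tsummand [measurable]:
  assumes [measurable]: "P \<in> borel_measurable M" "Q \<in> borel_measurable M"
  shows "tsummand P Q \<in> borel_measurable M"
  unfolding tsummand_def by measurable

lemma
  assumes "finite_measure N" and [measurable]: "P \<in> borel_measurable N" "Q \<in> borel_measurable N"
    and nonneg: "\<And>x. x \<in> space N \<Longrightarrow> P x \<ge> 0 \<and> Q x \<ge> 0"
  shows integrable_tsummand: "integrable N (tsummand P Q)"
    and integrable_tsummand_sq: "integrable N (\<lambda>x. (tsummand P Q x)^2)"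
proof -
  interpret finite_measure N by fact
  have bound: "\<bar>tsummand P Q x\<bar> \<le> 1" if "x \<in> space N" for x
    using nonneg[OF that] by (simp add: abs_tsummand_le_1)
  show "integrable N (tsummand P Q)"
    by (rule integrable_const_bound[where B = 1]) (simp_all add: bound)
  show "integrable N (\<lambda>x. (tsummand P Q x)^2)"
    by (rule integrable_const_bound[where B = 1]) (simp_all add: bound abs_square_le_1)
qed

lemma hellinger_sq:
  "(hellinger M P Q)^2 = (\<integral>x. (sqrt (P x) - sqrt (Q x))^2 \<partial>M) / 2"
  unfolding hellinger_def by (simp add: power_mult_distrib power_divide)

lemma integrable_sq_sqrt_diff:
  assumes "is_density M P" "is_density M Q"
  shows "integrable M (\<lambda>x. (sqrt (P x) - sqrt (Q x))^2)"
proof (rule Bochner_Integration.integrable_bound)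
  have [measurable]: "P \<in> borel_measurable M" "Q \<in> borel_measurable M"
    using assms unfolding is_density_def by simp_all
  show "integrable M (\<lambda>x. P x + Q x)"
    using assms unfolding is_density_def by simp
  show "(\<lambda>x. (sqrt (P x) - sqrt (Q x))^2) \<in> borel_measurable M"
    by measurable
  show "AE x in M. norm ((sqrt (P x) - sqrt (Q x))^2) \<le> norm (P x + Q x)"
  proof (rule AE_I2)
    fix x assume "x \<in> space M"
    then have "P x \<ge> 0" "Q x \<ge> 0" using assms unfolding is_density_def by auto
    then have "(sqrt (P x) - sqrt (Q x))^2 \<le> P x + Q x"
      by (simp add: power2_diff)
    then show "norm ((sqrt (P x) - sqrt (Q x))^2) \<le> norm (P x + Q x)"
      by simp
  qed
qed

lemma integral_tsummand_sq_density_le: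
  assumes P: "is_density M P" and Q: "is_density M Q" and R: "is_density M R"
  shows "(\<integral>x. (tsummand P Q x)^2 \<partial>density M (\<lambda>x. ennreal (R x)))
           \<le> 18 * ((hellinger M P R)^2 + (hellinger M Q R)^2)"
proof -
  have [measurable]: "P \<in> borel_measurable M" "Q \<in> borel_measurable M" "R \<in> borel_measurable M"
    and nonneg: "\<And>x. x \<in> space M \<Longrightarrow> P x \<ge> 0 \<and> Q x \<ge> 0 \<and> R x \<ge> 0"
    using P Q R unfolding is_density_def by auto
  have "integrable (density M (\<lambda>x. ennreal (R x))) (\<lambda>x. (tsummand P Q x)^2)"
    using prob_space_density_is_density[OF R] nonneg
    by (intro integrable_tsummand_sq) (auto simp: prob_space_def)
  then have weighted: "integrable M (\<lambda>x. R x * (tsummand P Q x)^2)"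
    using nonneg by (subst (asm) integrable_density) auto
  have "(\<integral>x. (tsummand P Q x)^2 \<partial>density M (\<lambda>x. ennreal (R x)))
      = (\<integral>x. R x * (tsummand P Q x)^2 \<partial>M)"
    using nonneg by (subst integral_density) auto
  also have "\<dots> \<le> (\<integral>x. 9 * ((sqrt (P x) - sqrt (R x))^2 + (sqrt (Q x) - sqrt (R x))^2) \<partial>M)"
    using weighted integrable_sq_sqrt_diff[OF P R] integrable_sq_sqrt_diff[OF Q R] nonneg
    by (intro integral_mono mult_tsummand_sq_le) simp_all
  also have "\<dots> = 18 * ((hellinger M P R)^2 + (hellinger M Q R)^2)"
    using integrable_sq_sqrt_diff[OF P R] integrable_sq_sqrt_diff[OF Q R]
    by (simp add: hellinger_sq)
  finally show ?thesis .
qed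

theorem lemma3:
  fixes M :: "'a measure" and P Q R :: "'a \<Rightarrow> real" and n :: nat
  assumes "sigma_finite_measure M"
    and "is_density M P" and "is_density M Q" and "is_density M R"
    and "n \<ge> 1"
  shows "var_of (iid_sample M R n) (Tstat P Q n)
           \<le> 55 / real n * max ((hellinger M P R)^2) ((hellinger M Q R)^2)"
proof -
  define D where "D = density M (\<lambda>x. ennreal (R x))"
  interpret D: prob_space D
    unfolding D_def using assms(4) by (rule prob_space_density_is_density)
  have "P \<in> borel_measurable D" "Q \<in> borel_measurable D"
    and "\<And>x. x \<in> space D \<Longrightarrow> P x \<ge> 0 \<and> Q x \<ge> 0"
    using assms(2,3) unfolding D_def is_density_def by auto
  note tsummand_integrable =
    integrable_tsummand[OF D.finite_measure_axioms this]
    integrable_tsummand_sq[OF D.finite_measure_axioms this]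
  have "var_of (iid_sample M R n) (Tstat P Q n) = D.variance (tsummand P Q) / real n"
    using var_of_iid_mean[OF D.prob_space_axioms tsummand_integrable]
    unfolding iid_sample_def Tstat_def D_def by simp
  also have "\<dots> \<le> (\<integral>x. (tsummand P Q x)^2 \<partial>D) / real n"
    using D.variance_eq[OF tsummand_integrable] by (simp add: divide_right_mono)
  also have "\<dots> \<le> 18 * ((hellinger M P R)^2 + (hellinger M Q R)^2) / real n"
    using integral_tsummand_sq_density_le[OF assms(2-4)] unfolding D_def
    by (simp add: divide_right_mono)
  also have "\<dots> \<le> 55 * max ((hellinger M P R)^2) ((hellinger M Q R)^2) / real n"
  proof (intro divide_right_mono)
    have "18 * (x + y) \<le> 55 * max x y" if "0 \<le> x" "0 \<le> y" for x y :: real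
      using that by (simp add: max_def)
    then show "18 * ((hellinger M P R)^2 + (hellinger M Q R)^2)
        \<le> 55 * max ((hellinger M P R)^2) ((hellinger M Q R)^2)"
      by simp
  qed simp
  finally show ?thesis by simp
qed

end
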